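(* Fix $t>0$. For finite sets $X,Y\subset\mathbb{R}^D$, the magnitude distance $d^t_{Mag}(X,Y)=2\,\mathrm{Mag}(t(X\cup Y))-\mathrm{Mag}(tX)-\mathrm{Mag}(tY)$ satisfies: (i) Symmetry: $d^t_{Mag}(X,Y)=d^t_{Mag}(Y,X)$. (ii) Non-negativity: $d^t_{Mag}(X,Y)\ge 0$. (iii) Identity of indiscernibles: $d^t_{Mag}(X,Y)=0$ if and only if $X$ and $Y$ are magnitude-equivalent at scale $t$. (iv) No triangle inequality: for $D>1$, $d^t_{Mag}$ does not satisfy the triangle inequality on finite subsets of $\mathbb{R}^D$.
   Context: For a finite set $A\subset\mathbb{R}^D$ and $t>0$, $tA$ denotes $A$ with the metric $t\|x-y\|$. Its similarity matrix $\zeta_{tA}(x,y)=\exp(-t\|x-y\|)$ ($x,y\in A$) is invertible; the weighting $\mathbf{w}^t_A=\zeta_{tA}^{-1}\mathbb{1}$ is the unique vector with $\sum_{y\in A}\zeta_{tA}(x,y)\mathbf{w}^t_A(y)=1$ for all $x\in A$, and the magnitude is $\mathrm{Mag}(tA)=\sum_{x\in A}\mathbf{w}^t_A(x)$ (with $\mathrm{Mag}(t\emptyset)=0$). Two finite sets $X,Y\subset\mathbb{R}^D$ are magnitude-equivalent at scale $t$ if $\{x\in X:\mathbf{w}^t_X(x)\neq 0\}=\{y\in Y:\mathbf{w}^t_Y(y)\neq0\}$. *)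

theory Defs
  imports "HOL-Analysis.Analysis"
begin

text \<open>Similarity kernel of the scaled space tA: zeta(x,y) = exp(-t * norm(x - y)).\<close>
definition zeta :: "real \<Rightarrow> 'a::euclidean_space \<Rightarrow> 'a \<Rightarrow> real" where
  "zeta t x y = exp (- t * norm (x - y))"

definition weighting :: "real \<Rightarrow> 'a::euclidean_space set \<Rightarrow> 'a \<Rightarrow> real" where
  "weighting t A = (THE w. (\<forall>x. x \<notin> A \<longrightarrow> w x = 0) \<and>
                           (\<forall>x\<in>A. (\<Sum>y\<in>A. zeta t x y * w y) = 1))"

definition magnitude :: "real \<Rightarrow> 'a::euclidean_space set \<Rightarrow> real" where
  "magnitude t A = (\<Sum>x\<in>A. weighting t A x)"

definition mag_equivalent :: "real \<Rightarrow> 'a::euclidean_space set \<Rightarrow> 'a set \<Rightarrow> bool" where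
  "mag_equivalent t X Y \<longleftrightarrow>
     {x\<in>X. weighting t X x \<noteq> 0} = {y\<in>Y. weighting t Y y \<noteq> 0}"

definition mag_dist :: "real \<Rightarrow> 'a::euclidean_space set \<Rightarrow> 'a set \<Rightarrow> real" where
  "mag_dist t X Y = 2 * magnitude t (X \<union> Y) - magnitude t X - magnitude t Y"

end

theory Submission
  imports Defs "HOL-Computational_Algebra.Polynomial" "HOL-Probability.Distributions"
begin

text \<open>The kernel \<open>zeta t\<close> is strictly positive definite. For a Gaussian kernel
  \<open>exp (- s * norm (x - y)\<^sup>2)\<close> this follows by expanding \<open>exp (2 * s * (x \<bullet> y))\<close> into the
  kernels \<open>(x \<bullet> y) ^ n\<close>, which are positive semidefinite by Cauchy-Schwarz and whose forms
  cannot all vanish at a nonzero vector, by a Vandermonde argument along a direction separating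
  the points.
  The exponential kernel is a positive mixture of Gaussian kernels,
  \<open>exp (- 2 * r) = 2 / sqrt pi * \<integral>\<^sub>0\<^sup>\<infinity> exp (- u\<^sup>2 - r\<^sup>2 / u\<^sup>2) du\<close>
  (the Cauchy-Schloemilch substitution \<open>w = u - r / u\<close>).

  Hence weightings exist and are unique, and for \<open>X \<subseteq> U\<close> completing the square gives
  \<open>Mag(tX) = Mag(tU) - Q\<^sub>U(w\<^sub>X - w\<^sub>U)\<close>, where \<open>Q\<^sub>U\<close> is the positive definite form of \<open>zeta t\<close>
  on \<open>U\<close>. So magnitude is monotone, with equality exactly when the weightings agree; applied to
  \<open>X, Y \<subseteq> X \<union> Y\<close> this gives non-negativity and shows that the distance vanishes iff
  \<open>w\<^sub>X = w\<^sub>Y\<close>, i.e. iff \<open>X\<close> and \<open>Y\<close> are magnitude-equivalent. The triangle inequality fails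
  for four points at \<open>\<plusminus>3 \<mu> e\<^sub>1\<close>, \<open>\<plusminus>4 \<mu> e\<^sub>2\<close>, where all weightings can be computed
  explicitly.\<close>

section \<open>Strictly positive definite kernels\<close>

definition kernel_form :: "('a \<Rightarrow> 'a \<Rightarrow> real) \<Rightarrow> 'a set \<Rightarrow> ('a \<Rightarrow> real) \<Rightarrow> real" where
  "kernel_form K A w = (\<Sum>x\<in>A. \<Sum>y\<in>A. w x * w y * K x y)"

definition strictly_pd_kernel :: "('a \<Rightarrow> 'a \<Rightarrow> real) \<Rightarrow> bool" where
  "strictly_pd_kernel K \<longleftrightarrow>
     (\<forall>A w x. finite A \<longrightarrow> x \<in> A \<longrightarrow> w x \<noteq> 0 \<longrightarrow> kernel_form K A w > 0)"

lemma strictly_pd_kernelD: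
  "strictly_pd_kernel K \<Longrightarrow> finite A \<Longrightarrow> x \<in> A \<Longrightarrow> w x \<noteq> 0 \<Longrightarrow> kernel_form K A w > 0"
  unfolding strictly_pd_kernel_def by blast

lemma kernel_form_eq_sum_apply:
  "kernel_form K A w = (\<Sum>x\<in>A. w x * (\<Sum>y\<in>A. K x y * w y))"
  by (simp add: kernel_form_def sum_distrib_left mult_ac)

lemma kernel_form_nonneg:
  assumes "strictly_pd_kernel K" "finite A"
  shows "kernel_form K A w \<ge> 0"
proof (cases "\<exists>x\<in>A. w x \<noteq> 0")
  case True
  then show ?thesis using strictly_pd_kernelD[OF assms] by (meson less_imp_le)
next
  case False
  then show ?thesis by (simp add: kernel_form_def)
qed

lemma kernel_form_eq_0_iff:
  assumes "strictly_pd_kernel K" "finite A"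
  shows "kernel_form K A w = 0 \<longleftrightarrow> (\<forall>x\<in>A. w x = 0)"
  using strictly_pd_kernelD[OF assms] by (force simp: kernel_form_def)

lemma kernel_system_unique:
  assumes "strictly_pd_kernel K" "finite A"
    and "\<forall>x. x \<notin> A \<longrightarrow> v x = 0" "\<forall>x. x \<notin> A \<longrightarrow> w x = 0"
    and "\<forall>x\<in>A. (\<Sum>y\<in>A. K x y * v y) = (\<Sum>y\<in>A. K x y * w y)"
  shows "v = w"
proof -
  have "(\<Sum>y\<in>A. K x y * (v y - w y)) = 0" if "x \<in> A" for x
    using assms(5) that by (simp add: right_diff_distrib sum_subtractf)
  then have "kernel_form K A (\<lambda>x. v x - w x) = 0"
    by (simp add: kernel_form_eq_sum_apply)
  then show ?thesis
    using assms(3,4) kernel_form_eq_0_iff[OF assms(1,2)] by fastforce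
qed

text \<open>The Schur complement of the block of \<open>A\<close> in the kernel matrix of \<open>insert z A\<close> is the
  value of the form at the vector \<open>(1, - u)\<close>.\<close>
lemma kernel_Schur_complement_pos:
  assumes "strictly_pd_kernel K" "finite A" "z \<notin> A"
    and u_solves: "\<forall>x\<in>A. (\<Sum>y\<in>A. K x y * u y) = K x z"
  shows "K z z - (\<Sum>y\<in>A. K z y * u y) > 0"
proof -
  define e where "e x = (if x = z then 1 else - u x)" for x
  have apply_e: "(\<Sum>y\<in>insert z A. K x y * e y) = K x z - (\<Sum>y\<in>A. K x y * u y)" for x
  proof -
    have "(\<Sum>y\<in>A. K x y * e y) = - (\<Sum>y\<in>A. K x y * u y)"
      using assms(3) by (auto simp: e_def sum_negf[symmetric] intro!: sum.cong)
    then show ?thesis using assms(2,3) by (simp add: e_def)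
  qed
  have "kernel_form K (insert z A) e = (\<Sum>x\<in>insert z A. e x * (K x z - (\<Sum>y\<in>A. K x y * u y)))"
    by (simp add: kernel_form_eq_sum_apply apply_e)
  also have "\<dots> = K z z - (\<Sum>y\<in>A. K z y * u y)"
    using assms(2,3) u_solves by (simp add: e_def)
  moreover have "kernel_form K (insert z A) e > 0"
    using assms(1,2) by (intro strictly_pd_kernelD[of K _ z]) (auto simp: e_def)
  ultimately show ?thesis by simp
qed

text \<open>Block elimination of the new point \<open>z\<close>: its coefficient \<open>\<alpha>\<close> is obtained by dividing by
  the Schur complement.\<close>
lemma kernel_system_solvable:
  assumes "strictly_pd_kernel K" "finite A"
  shows "\<exists>w. (\<forall>x. x \<notin> A \<longrightarrow> w x = 0) \<and> (\<forall>x\<in>A. (\<Sum>y\<in>A. K x y * w y) = r x)"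
  using assms(2)
proof (induction A arbitrary: r rule: finite_induct)
  case empty
  show ?case by auto
next
  case (insert z A)
  obtain u where u_outside: "\<forall>x. x \<notin> A \<longrightarrow> u x = 0"
    and u_solves: "\<forall>x\<in>A. (\<Sum>y\<in>A. K x y * u y) = K x z"
    using insert.IH[of "\<lambda>x. K x z"] by blast
  obtain p where p_outside: "\<forall>x. x \<notin> A \<longrightarrow> p x = 0"
    and p_solves: "\<forall>x\<in>A. (\<Sum>y\<in>A. K x y * p y) = r x"
    using insert.IH[of r] by blast
  define \<delta> where "\<delta> = K z z - (\<Sum>y\<in>A. K z y * u y)"
  have "\<delta> > 0"
    unfolding \<delta>_def using kernel_Schur_complement_pos[OF assms(1) insert.hyps u_solves] .
  define \<alpha> where "\<alpha> = (r z - (\<Sum>y\<in>A. K z y * p y)) / \<delta>"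
  define w where "w x = (if x = z then \<alpha> else p x - \<alpha> * u x)" for x
  have apply_w: "(\<Sum>y\<in>insert z A. K x y * w y)
      = \<alpha> * K x z + (\<Sum>y\<in>A. K x y * p y) - \<alpha> * (\<Sum>y\<in>A. K x y * u y)" for x
  proof -
    have "(\<Sum>y\<in>A. K x y * w y) = (\<Sum>y\<in>A. K x y * p y - \<alpha> * (K x y * u y))"
      using insert.hyps(2) by (intro sum.cong) (auto simp: w_def algebra_simps)
    then show ?thesis
      using insert.hyps by (simp add: w_def sum_subtractf sum_distrib_left mult.commute)
  qed
  have "(\<Sum>y\<in>insert z A. K x y * w y) = r x" if "x \<in> insert z A" for x
  proof (cases "x = z")
    case True
    have "\<alpha> * \<delta> = r z - (\<Sum>y\<in>A. K z y * p y)" using \<open>\<delta> > 0\<close> by (simp add: \<alpha>_def)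
    then show ?thesis unfolding apply_w True \<delta>_def by (simp add: algebra_simps)
  next
    case False
    then show ?thesis using that u_solves p_solves by (simp add: apply_w)
  qed
  moreover have "\<forall>x. x \<notin> insert z A \<longrightarrow> w x = 0" using u_outside p_outside by (simp add: w_def)
  ultimately show ?case by blast
qed

section \<open>Strict positive definiteness of the Gaussian kernel\<close>

text \<open>Induction on \<open>n\<close>: \<open>(x \<bullet> y) ^ (n + 1) = (\<Sum>k\<in>Basis. (x \<bullet> k) * (y \<bullet> k) * (x \<bullet> y) ^ n)\<close>, so the
  induction hypothesis for the weights \<open>b x * (x \<bullet> k)\<close>, summed over \<open>k\<close>, and Cauchy-Schwarz for
  \<open>v\<close> and \<open>\<Sum>x\<in>A. (b x * (x \<bullet> v) ^ n) *\<^sub>R x\<close> give the step.\<close>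
lemma sum_inner_power_Cauchy_Schwarz:
  fixes A :: "'a::euclidean_space set"
  shows "(\<Sum>x\<in>A. b x * (x \<bullet> v) ^ n)\<^sup>2
           \<le> (v \<bullet> v) ^ n * (\<Sum>x\<in>A. \<Sum>y\<in>A. b x * b y * (x \<bullet> y) ^ n)"
proof (induction n arbitrary: b)
  case 0
  then show ?case by (simp add: power2_eq_square sum_product)
next
  case (Suc n)
  define w where "w = (\<Sum>x\<in>A. (b x * (x \<bullet> v) ^ n) *\<^sub>R x)"
  define F where "F k = (\<Sum>x\<in>A. \<Sum>y\<in>A. (b x * (x \<bullet> k)) * (b y * (y \<bullet> k)) * (x \<bullet> y) ^ n)" for k
  have split: "b x * b y * (x \<bullet> y) ^ Suc n
      = (\<Sum>k\<in>Basis. (b x * (x \<bullet> k)) * (b y * (y \<bullet> k)) * (x \<bullet> y) ^ n)" for x y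
  proof -
    have "b x * b y * (x \<bullet> y) ^ Suc n
        = b x * b y * (x \<bullet> y) ^ n * (\<Sum>k\<in>Basis. (x \<bullet> k) * (y \<bullet> k))"
      by (simp only: power_Suc euclidean_inner[of x y, symmetric]) (simp add: mult_ac)
    then show ?thesis by (simp add: sum_distrib_left mult_ac)
  qed
  have expand: "(\<Sum>x\<in>A. \<Sum>y\<in>A. b x * b y * (x \<bullet> y) ^ Suc n) = (\<Sum>k\<in>Basis. F k)"
    unfolding split F_def by (simp add: sum.swap[of _ Basis] sum.swap[of _ Basis A])
  have w_inner: "w \<bullet> k = (\<Sum>x\<in>A. (b x * (x \<bullet> k)) * (x \<bullet> v) ^ n)" for k
    by (simp add: w_def inner_sum_left mult_ac)
  have "(\<Sum>x\<in>A. b x * (x \<bullet> v) ^ Suc n)\<^sup>2 = (v \<bullet> w)\<^sup>2"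
    by (simp add: w_def inner_sum_right inner_commute mult_ac)
  also have "\<dots> \<le> (v \<bullet> v) * (w \<bullet> w)"
    using Cauchy_Schwarz_ineq[of v w] by simp
  also have "w \<bullet> w = (\<Sum>k\<in>Basis. (\<Sum>x\<in>A. (b x * (x \<bullet> k)) * (x \<bullet> v) ^ n)\<^sup>2)"
    by (subst euclidean_inner) (simp add: w_inner power2_eq_square)
  also have "(v \<bullet> v) * \<dots> \<le> (v \<bullet> v) * (\<Sum>k\<in>Basis. (v \<bullet> v) ^ n * F k)"
    unfolding F_def by (intro mult_left_mono sum_mono Suc.IH) simp
  also have "\<dots> = (v \<bullet> v) ^ Suc n * (\<Sum>x\<in>A. \<Sum>y\<in>A. b x * b y * (x \<bullet> y) ^ Suc n)"
    unfolding expand by (simp add: sum_distrib_left mult.assoc)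
  finally show ?case .
qed

lemma inner_power_form_nonneg:
  fixes A :: "'a::euclidean_space set"
  shows "(\<Sum>x\<in>A. \<Sum>y\<in>A. b x * b y * (x \<bullet> y) ^ n) \<ge> 0"
proof -
  obtain v :: 'a where "v \<in> Basis" using nonempty_Basis by blast
  then have "(\<Sum>x\<in>A. b x * (x \<bullet> v) ^ n)\<^sup>2 \<le> (\<Sum>x\<in>A. \<Sum>y\<in>A. b x * b y * (x \<bullet> y) ^ n)"
    using sum_inner_power_Cauchy_Schwarz[of b v n A] by simp
  then show ?thesis by (rule order_trans[OF zero_le_power2])
qed

lemma inner_power_form_pos:
  fixes A :: "'a::euclidean_space set"
  assumes "(\<Sum>x\<in>A. b x * (x \<bullet> v) ^ n) \<noteq> 0"
  shows "(\<Sum>x\<in>A. \<Sum>y\<in>A. b x * b y * (x \<bullet> y) ^ n) > 0"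
proof -
  have "0 < (\<Sum>x\<in>A. b x * (x \<bullet> v) ^ n)\<^sup>2" using assms by simp
  also note sum_inner_power_Cauchy_Schwarz
  finally show ?thesis using inner_ge_zero[of v] by (auto simp: zero_less_mult_iff)
qed

lemma vanishing_power_sums_imp_zero:
  fixes a :: "'b \<Rightarrow> real"
  assumes "finite A" "inj_on a A" "\<And>n. (\<Sum>x\<in>A. b x * a x ^ n) = 0" "z \<in> A"
  shows "b z = 0"
proof -
  define p where "p = (\<Prod>y\<in>A-{z}. [:- a y, 1:])"
  have poly_p: "poly p r = (\<Prod>y\<in>A-{z}. r - a y)" for r
    by (simp add: p_def poly_prod)
  have "(\<Sum>x\<in>A. b x * poly p (a x)) = (\<Sum>i\<le>degree p. coeff p i * (\<Sum>x\<in>A. b x * a x ^ i))"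
    by (simp add: poly_altdef sum_distrib_left mult_ac sum.swap[of _ A])
  also have "\<dots> = 0" using assms(3) by simp
  finally have sum_zero: "(\<Sum>x\<in>A. b x * poly p (a x)) = 0" .
  have "poly p (a x) = 0" if "x \<in> A - {z}" for x
    using that assms(1) by (auto simp: poly_p intro!: prod_zero)
  then have "(\<Sum>x\<in>A. b x * poly p (a x)) = b z * poly p (a z)"
    using assms(1,4) by (simp add: sum.remove)
  moreover have "poly p (a z) \<noteq> 0"
    using assms(1,2,4) by (auto simp: poly_p prod_zero_iff inj_on_def)
  ultimately show ?thesis using sum_zero by simp
qed

lemma ex_not_orthogonal_finite:
  fixes W :: "'a::real_inner set"
  assumes "finite W" "0 \<notin> W"
  shows "\<exists>v. \<forall>w\<in>W. v \<bullet> w \<noteq> 0"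
  using assms
proof (induction W rule: finite_induct)
  case empty
  then show ?case by simp
next
  case (insert w W)
  then obtain v where v: "\<forall>u\<in>W. v \<bullet> u \<noteq> 0" by auto
  have "finite ((\<lambda>u. - (v \<bullet> u) / (w \<bullet> u)) ` insert w W)"
    using insert.hyps(1) by simp
  then obtain e :: real where e: "e \<notin> (\<lambda>u. - (v \<bullet> u) / (w \<bullet> u)) ` insert w W"
    using ex_new_if_finite[OF infinite_UNIV_char_0] by metis
  have "(v + e *\<^sub>R w) \<bullet> u \<noteq> 0" if u: "u \<in> insert w W" for u
  proof (cases "w \<bullet> u = 0")
    case True
    then have "u \<in> W" using u insert.prems by auto
    then show ?thesis using True v by (simp add: inner_add_left)
  next
    case False
    then have "e \<noteq> - (v \<bullet> u) / (w \<bullet> u)" using e u by blast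
    then show ?thesis using False by (simp add: inner_add_left field_simps)
  qed
  then show ?case by blast
qed

lemma ex_inj_on_inner:
  fixes A :: "'a::real_inner set"
  assumes "finite A"
  shows "\<exists>v. inj_on (\<lambda>x. x \<bullet> v) A"
proof -
  define D where "D = (\<lambda>(x, y). x - y) ` (A \<times> A) - {0}"
  obtain v where v: "\<forall>d\<in>D. v \<bullet> d \<noteq> 0"
    using ex_not_orthogonal_finite[of D] assms by (auto simp: D_def)
  have "x = y" if "x \<in> A" "y \<in> A" "x \<bullet> v = y \<bullet> v" for x y
  proof (rule ccontr)
    assume "x \<noteq> y"
    then have "v \<bullet> (x - y) \<noteq> 0" using v that(1,2) by (auto simp: D_def)
    then show False using that(3) by (simp add: inner_diff_right inner_commute)
  qed
  then show ?thesis by (auto intro: inj_onI)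
qed

text \<open>Expanding \<open>exp (2 * s * (x \<bullet> y))\<close> writes the Gaussian form as a series of the forms of
  the kernels \<open>(x \<bullet> y) ^ n\<close>; if all of them vanished, so would all power sums of the weights
  along a direction separating the points of \<open>A\<close>.\<close>
lemma strictly_pd_gaussian_kernel:
  assumes "s > 0"
  shows "strictly_pd_kernel (\<lambda>x y :: 'a::euclidean_space. exp (- s * (norm (x - y))\<^sup>2))"
  unfolding strictly_pd_kernel_def
proof (intro allI impI)
  fix A :: "'a set" and c :: "'a \<Rightarrow> real" and x0
  assume A: "finite A" and x0: "x0 \<in> A" "c x0 \<noteq> 0"
  define b where "b x = c x * exp (- s * (norm x)\<^sup>2)" for x
  define T where "T n = (2 * s) ^ n / fact n * (\<Sum>x\<in>A. \<Sum>y\<in>A. b x * b y * (x \<bullet> y) ^ n)" for n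
  have kernel: "c x * c y * exp (- s * (norm (x - y))\<^sup>2) = b x * b y * exp (2 * s * (x \<bullet> y))"
    for x y
  proof -
    have "- s * (norm (x - y))\<^sup>2 = - s * (norm x)\<^sup>2 + - s * (norm y)\<^sup>2 + 2 * s * (x \<bullet> y)"
      by (simp add: power2_norm_eq_inner inner_diff inner_commute algebra_simps)
    then have "exp (- s * (norm (x - y))\<^sup>2)
        = exp (- s * (norm x)\<^sup>2) * exp (- s * (norm y)\<^sup>2) * exp (2 * s * (x \<bullet> y))"
      by (simp only: exp_add)
    then show ?thesis by (simp add: b_def mult_ac)
  qed
  have "(\<lambda>n. \<Sum>x\<in>A. \<Sum>y\<in>A. b x * b y * ((2 * s * (x \<bullet> y)) ^ n /\<^sub>R fact n))
          sums (\<Sum>x\<in>A. \<Sum>y\<in>A. b x * b y * exp (2 * s * (x \<bullet> y)))"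
    by (intro sums_sum sums_mult exp_converges)
  moreover have "(\<lambda>n. \<Sum>x\<in>A. \<Sum>y\<in>A. b x * b y * ((2 * s * (x \<bullet> y)) ^ n /\<^sub>R fact n)) = T"
    by (rule ext) (simp add: T_def sum_distrib_left power_mult_distrib divide_inverse mult_ac)
  ultimately have sums: "T sums kernel_form (\<lambda>x y. exp (- s * (norm (x - y))\<^sup>2)) A c"
    unfolding kernel_form_def kernel by simp
  have T_nonneg: "T n \<ge> 0" for n
    unfolding T_def using assms inner_power_form_nonneg[of b n A] by simp
  obtain v :: 'a where "inj_on (\<lambda>x. x \<bullet> v) A"
    using ex_inj_on_inner[OF A] by blast
  moreover have "b x0 \<noteq> 0" using x0 by (simp add: b_def)
  ultimately obtain n where "(\<Sum>x\<in>A. b x * (x \<bullet> v) ^ n) \<noteq> 0"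
    using vanishing_power_sums_imp_zero[OF A _ _ x0(1), of "\<lambda>x. x \<bullet> v" b] by blast
  then have "T n > 0"
    unfolding T_def using assms inner_power_form_pos[of b v n A] by simp
  then show "kernel_form (\<lambda>x y. exp (- s * (norm (x - y))\<^sup>2)) A c > 0"
    using suminf_pos_iff[OF sums_summable[OF sums] T_nonneg] sums_unique[OF sums] by auto
qed

section \<open>The exponential kernel as a mixture of Gaussian kernels\<close>

lemma gaussian_integral_real: "((\<lambda>x::real. exp (- x\<^sup>2)) has_integral sqrt pi) UNIV"
proof -
  have "has_bochner_integral lborel (\<lambda>x::real. exp (- x\<^sup>2)) (2 *\<^sub>R (sqrt pi / 2))"
    by (rule has_bochner_integral_even_function[OF gaussian_moment_0]) simp
  then show ?thesis by (auto simp: has_bochner_integral_iff dest: has_integral_integral_lborel)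
qed

lemma gaussian_integral_half_line: "((\<lambda>x::real. exp (- x\<^sup>2)) has_integral sqrt pi / 2) {0<..}"
proof -
  have "integrable lborel (\<lambda>x::real. indicator {0..} x *\<^sub>R exp (- x\<^sup>2))"
    and half: "integral\<^sup>L lborel (\<lambda>x::real. indicator {0..} x *\<^sub>R exp (- x\<^sup>2)) = sqrt pi / 2"
    using gaussian_moment_0 by (simp_all add: has_bochner_integral_iff)
  from has_integral_integral_lborel[OF this(1)]
  have "((\<lambda>x::real. indicator {0..} x *\<^sub>R exp (- x\<^sup>2)) has_integral sqrt pi / 2) UNIV"
    unfolding half .
  moreover have "(\<lambda>x::real. indicator {0..} x *\<^sub>R exp (- x\<^sup>2))
      = (\<lambda>x. if x \<in> {0..} then exp (- x\<^sup>2) else 0)"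
    by (auto simp: fun_eq_iff)
  ultimately have "((\<lambda>x::real. if x \<in> {0..} then exp (- x\<^sup>2) else 0) has_integral sqrt pi / 2) UNIV"
    by (simp only:)
  then have "((\<lambda>x::real. exp (- x\<^sup>2)) has_integral sqrt pi / 2) {0..}"
    by (simp only: has_integral_restrict_UNIV)
  then show ?thesis
    using has_integral_interior[of "{0::real..}" "\<lambda>x. exp (- x\<^sup>2)" "sqrt pi / 2"] by simp
qed

text \<open>The substitution \<open>w = u - b / u\<close> maps \<open>{0<..}\<close> bijectively onto \<open>\<real>\<close> with
  \<open>dw = (1 + b / u\<^sup>2) du\<close>.\<close>
lemma gaussian_shift_inverse_integral:
  fixes b :: real
  assumes "b > 0"
  shows "(\<lambda>u. (1 + b / u\<^sup>2) * exp (- (u - b / u)\<^sup>2)) absolutely_integrable_on {0<..}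
       \<and> integral {0<..} (\<lambda>u. (1 + b / u\<^sup>2) * exp (- (u - b / u)\<^sup>2)) = sqrt pi"
proof -
  define g where "g u = u - b / u" for u :: real
  have der: "(g has_field_derivative 1 + b / u\<^sup>2) (at u within {0<..})" if "u \<in> {0<..}" for u
    using that unfolding g_def
    by (auto intro!: derivative_eq_intros simp: power2_eq_square field_simps)
  have inj: "inj_on g {0<..}"
  proof (rule inj_onI)
    fix x y :: real assume xy: "x \<in> {0<..}" "y \<in> {0<..}" "g x = g y"
    then have "(x - y) * (x * y + b) = x * y * (g x - g y)"
      by (simp add: g_def field_simps)
    moreover have "x * y + b > 0" using xy(1,2) assms by (simp add: add_pos_pos)
    ultimately show "x = y" using xy(3) by simp
  qed
  have "w \<in> g ` {0<..}" for w
  proof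
    define u where "u = (w + sqrt (w\<^sup>2 + 4 * b)) / 2"
    have "sqrt (w\<^sup>2 + 4 * b) > \<bar>w\<bar>"
      using assms real_sqrt_less_iff[of "w\<^sup>2" "w\<^sup>2 + 4 * b"] by simp
    then show "u \<in> {0<..}" by (simp add: u_def)
    have "(sqrt (w\<^sup>2 + 4 * b))\<^sup>2 = w\<^sup>2 + 4 * b" using assms by simp
    then have "u * u - w * u - b = 0" unfolding u_def by (simp add: power2_eq_square field_simps)
    with \<open>u \<in> {0<..}\<close> show "w = g u" by (simp add: g_def field_simps)
  qed
  then have "g ` {0<..} = UNIV" by blast
  moreover have "(\<lambda>w::real. exp (- w\<^sup>2)) absolutely_integrable_on UNIV"
    using gaussian_integral_real by (intro nonnegative_absolutely_integrable_1) auto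
  ultimately have "(\<lambda>u. \<bar>1 + b / u\<^sup>2\<bar> * exp (- (g u)\<^sup>2)) absolutely_integrable_on {0<..}
      \<and> integral {0<..} (\<lambda>u. \<bar>1 + b / u\<^sup>2\<bar> * exp (- (g u)\<^sup>2)) = sqrt pi"
    using has_absolute_integral_change_of_variables_1'[OF _ der inj, of "\<lambda>w. exp (- w\<^sup>2)"]
      gaussian_integral_real by (simp add: integral_unique)
  moreover have "\<bar>1 + b / u\<^sup>2\<bar> = 1 + b / u\<^sup>2" for u
    using assms by (simp add: add_pos_nonneg)
  ultimately show ?thesis by (simp add: g_def)
qed

lemma inversion_invariant_integral:
  fixes f :: "real \<Rightarrow> real"
  assumes "b > 0" "f absolutely_integrable_on {0<..}" "\<And>u. u > 0 \<Longrightarrow> f (b / u) = f u"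
  shows "(\<lambda>u. b / u\<^sup>2 * f u) absolutely_integrable_on {0<..}
       \<and> integral {0<..} (\<lambda>u. b / u\<^sup>2 * f u) = integral {0<..} f"
proof -
  define S :: "real set" where "S = {0<..}"
  define h where "h u = b / u" for u :: real
  have S: "S \<in> sets lebesgue" by (simp add: S_def)
  have der: "(h has_field_derivative - b / u\<^sup>2) (at u within S)" if "u \<in> S" for u
    using that unfolding h_def S_def
    by (auto intro!: derivative_eq_intros simp: power2_eq_square field_simps)
  have "inj_on h S" using assms(1) by (auto simp: inj_on_def h_def S_def)
  moreover have image_h: "h ` S = S"
  proof
    show "h ` S \<subseteq> S" using assms(1) by (auto simp: h_def S_def)
    show "S \<subseteq> h ` S"
    proof
      fix u assume "u \<in> S"
      then have "u = h (h u)" "h u \<in> S" using assms(1) by (auto simp: h_def S_def)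
      then show "u \<in> h ` S" by blast
    qed
  qed
  ultimately have "(\<lambda>u. \<bar>- b / u\<^sup>2\<bar> * f (h u)) absolutely_integrable_on S
      \<and> integral S (\<lambda>u. \<bar>- b / u\<^sup>2\<bar> * f (h u)) = integral S f"
    using has_absolute_integral_change_of_variables_1'[OF S der, of f "integral S f"] assms(2)
    by (simp add: S_def)
  moreover have reflect: "\<bar>- b / u\<^sup>2\<bar> * f (h u) = b / u\<^sup>2 * f u" if "u \<in> S" for u
    using that assms(1,3) by (simp add: h_def S_def)
  then have "integral S (\<lambda>u. \<bar>- b / u\<^sup>2\<bar> * f (h u)) = integral S (\<lambda>u. b / u\<^sup>2 * f u)"
    by (rule integral_cong)
  moreover have "(\<lambda>u. \<bar>- b / u\<^sup>2\<bar> * f (h u)) absolutely_integrable_on S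
      \<longleftrightarrow> (\<lambda>u. b / u\<^sup>2 * f u) absolutely_integrable_on S"
    by (intro set_integrable_cong refl reflect)
  ultimately show ?thesis by (simp add: S_def)
qed

text \<open>The two summands of \<open>gaussian_shift_inverse_integral\<close> contribute equally, since the
  inversion \<open>u \<mapsto> b / u\<close> only changes the sign of \<open>u - b / u\<close>.\<close>
lemma gaussian_Cauchy_Schloemilch:
  fixes b :: real
  assumes "b > 0"
  shows "((\<lambda>u. exp (- (u - b / u)\<^sup>2)) has_integral sqrt pi / 2) {0<..}"
proof -
  define S :: "real set" where "S = {0<..}"
  define A where "A u = exp (- (u - b / u)\<^sup>2)" for u
  define B where "B u = b / u\<^sup>2 * A u" for u
  have A_nonneg: "A u \<ge> 0" and B_nonneg: "B u \<ge> 0" for u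
    using assms by (simp_all add: A_def B_def)
  have AB: "(\<lambda>u. A u + B u) absolutely_integrable_on S" "integral S (\<lambda>u. A u + B u) = sqrt pi"
    using gaussian_shift_inverse_integral[OF assms]
    by (simp_all add: S_def A_def B_def distrib_right)
  have A_int: "A absolutely_integrable_on S"
  proof (rule measurable_bounded_by_integrable_imp_absolutely_integrable)
    show "A \<in> borel_measurable (lebesgue_on S)"
      unfolding A_def S_def
      by (intro continuous_imp_measurable_on_sets_lebesgue continuous_intros) auto
    show "(\<lambda>u. A u + B u) integrable_on S"
      using AB(1) by (rule set_lebesgue_integral_eq_integral(1))
  qed (use A_nonneg B_nonneg in \<open>simp_all add: S_def\<close>)
  have "A (b / u) = A u" if "u > 0" for u
  proof -
    have "b / u - b / (b / u) = - (u - b / u)" using that assms by (simp add: field_simps)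
    then show ?thesis unfolding A_def by (simp only: power2_minus)
  qed
  then have "B absolutely_integrable_on S \<and> integral S B = integral S A"
    using inversion_invariant_integral[OF assms, of A] A_int by (simp add: S_def B_def[abs_def])
  moreover have "integral S (\<lambda>u. A u + B u) = integral S A + integral S B"
    using A_int calculation by (intro integral_add) (auto intro: set_lebesgue_integral_eq_integral(1))
  ultimately have "integral S A = sqrt pi / 2" using AB(2) by simp
  moreover have "(A has_integral integral S A) S"
    using A_int by (intro integrable_integral set_lebesgue_integral_eq_integral(1))
  ultimately have "(A has_integral sqrt pi / 2) S" by (simp only:)
  then show ?thesis by (simp add: S_def A_def[abs_def])
qed

lemma exp_gaussian_mixture:
  fixes r :: real
  assumes "r \<ge> 0"
  shows "((\<lambda>u. exp (- u\<^sup>2) * exp (- r\<^sup>2 / u\<^sup>2)) has_integral sqrt pi / 2 * exp (- 2 * r)) {0<..}"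
proof (cases "r = 0")
  case True
  then show ?thesis using gaussian_integral_half_line by simp
next
  case False
  have "exp (- 2 * r) * exp (- (u - r / u)\<^sup>2) = exp (- u\<^sup>2) * exp (- r\<^sup>2 / u\<^sup>2)"
    if "u \<in> {0<..}" for u
  proof -
    have "- 2 * r + - (u - r / u)\<^sup>2 = - u\<^sup>2 + - r\<^sup>2 / u\<^sup>2"
      using that by (simp add: power2_eq_square field_simps)
    then show ?thesis by (simp only: exp_add[symmetric])
  qed
  moreover have "((\<lambda>u. exp (- 2 * r) * exp (- (u - r / u)\<^sup>2)) has_integral exp (- 2 * r) * (sqrt pi / 2)) {0<..}"
    using False assms by (intro has_integral_mult_right gaussian_Cauchy_Schloemilch) simp
  ultimately show ?thesis
    by (subst (asm) has_integral_cong) (simp_all add: mult.commute)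
qed

lemma has_integral_half_line_pos:
  fixes f :: "real \<Rightarrow> real"
  assumes "(f has_integral I) {0<..}" "continuous_on {0<..} f" "\<And>u. u > 0 \<Longrightarrow> f u > 0"
  shows "I > 0"
proof -
  have sub: "{1..2} \<subseteq> {0::real<..}" by auto
  then obtain m where m: "m \<in> {1..2}" "\<forall>u\<in>{1..2}. f m \<le> f u"
    using continuous_attains_inf[of "{1..2::real}" f] continuous_on_subset[OF assms(2)] by auto
  have "0 < integral {1..2::real} (\<lambda>u. f m)"
    using m assms(3) by simp
  also have "\<dots> \<le> integral {1..2} f"
    using m continuous_on_subset[OF assms(2) sub]
    by (intro integral_le) (auto intro: integrable_continuous_interval)
  also have "\<dots> \<le> integral {0<..} f"
    using assms sub
    by (intro integral_subset_le) (auto intro: integrable_on_subinterval less_imp_le)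
  finally show ?thesis using assms(1) by (simp add: integral_unique)
qed

text \<open>By \<open>exp_gaussian_mixture\<close> with \<open>r = t * norm (x - y) / 2\<close>, the form of \<open>zeta t\<close> is, up to
  the factor \<open>sqrt pi / 2\<close>, the integral over \<open>u > 0\<close> of \<open>exp (- u\<^sup>2)\<close> times the form of the
  Gaussian kernel with \<open>s = t\<^sup>2 / (4 * u\<^sup>2)\<close>.\<close>
lemma strictly_pd_zeta:
  assumes "t > 0"
  shows "strictly_pd_kernel (zeta t :: 'a::euclidean_space \<Rightarrow> 'a \<Rightarrow> real)"
  unfolding strictly_pd_kernel_def
proof (intro allI impI)
  fix A :: "'a set" and c :: "'a \<Rightarrow> real" and x0
  assume A: "finite A" and x0: "x0 \<in> A" "c x0 \<noteq> 0"
  define H where "H u = (\<Sum>x\<in>A. \<Sum>y\<in>A. c x * c y *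
      (exp (- u\<^sup>2) * exp (- (t * norm (x - y) / 2)\<^sup>2 / u\<^sup>2)))" for u
  have "(H has_integral (\<Sum>x\<in>A. \<Sum>y\<in>A. c x * c y * (sqrt pi / 2 * exp (- 2 * (t * norm (x - y) / 2))))) {0<..}"
    unfolding H_def using assms
    by (intro has_integral_sum A has_integral_mult_right exp_gaussian_mixture) simp
  then have "(H has_integral sqrt pi / 2 * kernel_form (zeta t) A c) {0<..}"
    by (simp add: kernel_form_def zeta_def sum_distrib_left mult_ac)
  moreover have "continuous_on {0<..} H"
    unfolding H_def by (auto intro!: continuous_intros)
  moreover have "H u > 0" if "u > 0" for u
  proof -
    have "H u = exp (- u\<^sup>2) * kernel_form (\<lambda>x y. exp (- (t\<^sup>2 / (4 * u\<^sup>2)) * (norm (x - y))\<^sup>2)) A c"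
      unfolding H_def kernel_form_def sum_distrib_left
      by (intro sum.cong refl) (simp add: power_mult_distrib power_divide mult_ac)
    moreover have "kernel_form (\<lambda>x y. exp (- (t\<^sup>2 / (4 * u\<^sup>2)) * (norm (x - y))\<^sup>2)) A c > 0"
      using that assms A x0 by (intro strictly_pd_kernelD[OF strictly_pd_gaussian_kernel]) auto
    ultimately show ?thesis by simp
  qed
  ultimately have "sqrt pi / 2 * kernel_form (zeta t) A c > 0"
    by (rule has_integral_half_line_pos)
  then show "kernel_form (zeta t) A c > 0" by (simp add: zero_less_mult_iff)
qed

section \<open>Weightings and magnitude\<close>

lemma zeta_commute: "zeta t x y = zeta t y x"
  by (simp add: zeta_def norm_minus_commute)

lemma zeta_self [simp]: "zeta t x x = 1"
  by (simp add: zeta_def)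

definition is_weighting :: "real \<Rightarrow> 'a::euclidean_space set \<Rightarrow> ('a \<Rightarrow> real) \<Rightarrow> bool" where
  "is_weighting t A w \<longleftrightarrow>
     (\<forall>x. x \<notin> A \<longrightarrow> w x = 0) \<and> (\<forall>x\<in>A. (\<Sum>y\<in>A. zeta t x y * w y) = 1)"

lemma is_weighting_unique:
  assumes "finite A" "t > 0" "is_weighting t A v" "is_weighting t A w"
  shows "v = w"
  using assms by (intro kernel_system_unique[OF strictly_pd_zeta]) (auto simp: is_weighting_def)

lemma weighting_is_weighting:
  assumes "finite A" "t > 0"
  shows "is_weighting t A (weighting t A)"
proof -
  obtain w where "is_weighting t A w"
    using kernel_system_solvable[OF strictly_pd_zeta[OF assms(2)] assms(1), of "\<lambda>_. 1"]
    by (auto simp: is_weighting_def)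
  then have "is_weighting t A (THE w. is_weighting t A w)"
    using theI[of "is_weighting t A" w] is_weighting_unique[OF assms] by blast
  then show ?thesis by (simp add: weighting_def is_weighting_def[abs_def])
qed

lemma weighting_eqI:
  assumes "finite A" "t > 0" "is_weighting t A w"
  shows "weighting t A = w"
  using is_weighting_unique[OF assms(1,2) weighting_is_weighting[OF assms(1,2)] assms(3)] .

lemma magnitude_eqI:
  assumes "finite A" "t > 0" "is_weighting t A w"
  shows "magnitude t A = (\<Sum>x\<in>A. w x)"
  by (simp add: magnitude_def weighting_eqI[OF assms])

lemma weighting_outside:
  assumes "finite A" "t > 0" "x \<notin> A"
  shows "weighting t A x = 0"
  using weighting_is_weighting[OF assms(1,2)] assms(3) by (simp add: is_weighting_def)

lemma kernel_form_weighting: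
  assumes "finite A" "t > 0"
  shows "kernel_form (zeta t) A (weighting t A) = magnitude t A"
  using weighting_is_weighting[OF assms]
  by (simp add: kernel_form_eq_sum_apply magnitude_def is_weighting_def)

lemma weighting_support:
  assumes "finite A" "t > 0"
  shows "weighting t {x\<in>A. weighting t A x \<noteq> 0} = weighting t A"
proof (rule weighting_eqI)
  let ?S = "{x\<in>A. weighting t A x \<noteq> 0}"
  have "(\<Sum>y\<in>?S. zeta t x y * weighting t A y) = (\<Sum>y\<in>A. zeta t x y * weighting t A y)" for x
    using assms(1) by (intro sum.mono_neutral_left) auto
  then show "is_weighting t ?S (weighting t A)"
    using weighting_is_weighting[OF assms] by (fastforce simp: is_weighting_def)
qed (use assms in auto)

lemma weighting_Un:
  assumes "finite X" "finite Y" "t > 0" "weighting t X = weighting t Y"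
  shows "weighting t (X \<union> Y) = weighting t X"
proof (rule weighting_eqI)
  let ?W = "weighting t X"
  have WX: "is_weighting t X ?W" and WY: "is_weighting t Y ?W"
    using weighting_is_weighting[OF assms(1,3)] weighting_is_weighting[OF assms(2,3)] assms(4)
    by simp_all
  have restrict: "(\<Sum>y\<in>X \<union> Y. zeta t x y * ?W y) = (\<Sum>y\<in>B. zeta t x y * ?W y)"
    if "B \<subseteq> X \<union> Y" "is_weighting t B ?W" for B x
    using that assms(1,2) by (intro sum.mono_neutral_right) (auto simp: is_weighting_def)
  show "is_weighting t (X \<union> Y) ?W"
    unfolding is_weighting_def
  proof (intro conjI allI impI ballI)
    fix x assume "x \<notin> X \<union> Y"
    then show "?W x = 0" using WX by (simp add: is_weighting_def)
  next
    fix x assume "x \<in> X \<union> Y"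
    then show "(\<Sum>y\<in>X \<union> Y. zeta t x y * ?W y) = 1"
    proof
      assume "x \<in> X"
      then show ?thesis using restrict[OF _ WX] WX by (simp add: is_weighting_def)
    next
      assume "x \<in> Y"
      then show ?thesis using restrict[OF _ WY] WY by (simp add: is_weighting_def)
    qed
  qed
qed (use assms in auto)

text \<open>Completing the square: \<open>Mag(tU)\<close> is the maximum of \<open>2 * sum w U - kernel_form (zeta t) U w\<close>,
  attained exactly at the weighting.\<close>
lemma magnitude_variational:
  assumes "finite U" "t > 0"
  shows "2 * (\<Sum>x\<in>U. w x) - kernel_form (zeta t) U w
       = magnitude t U - kernel_form (zeta t) U (\<lambda>x. w x - weighting t U x)"
proof -
  define W where "W = weighting t U"
  have W: "is_weighting t U W" using weighting_is_weighting[OF assms] by (simp add: W_def)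
  have "(\<Sum>x\<in>U. \<Sum>y\<in>U. w x * W y * zeta t x y) = (\<Sum>x\<in>U. w x * (\<Sum>y\<in>U. zeta t x y * W y))"
    by (simp add: sum_distrib_left mult_ac)
  also have "\<dots> = (\<Sum>x\<in>U. w x)"
    using W by (simp add: is_weighting_def)
  finally have cross: "(\<Sum>x\<in>U. \<Sum>y\<in>U. w x * W y * zeta t x y) = (\<Sum>x\<in>U. w x)" .
  have "(\<Sum>x\<in>U. \<Sum>y\<in>U. W x * w y * zeta t x y) = (\<Sum>x\<in>U. \<Sum>y\<in>U. w x * W y * zeta t x y)"
    by (subst sum.swap) (simp add: zeta_commute mult_ac)
  moreover have "kernel_form (zeta t) U (\<lambda>x. w x - W x) = kernel_form (zeta t) U w
      - (\<Sum>x\<in>U. \<Sum>y\<in>U. w x * W y * zeta t x y) - (\<Sum>x\<in>U. \<Sum>y\<in>U. W x * w y * zeta t x y)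
      + kernel_form (zeta t) U W"
    by (simp add: kernel_form_def algebra_simps sum_subtractf sum.distrib)
  ultimately show ?thesis
    using cross kernel_form_weighting[OF assms] by (simp add: W_def)
qed

lemma magnitude_subset_eq:
  assumes "finite U" "t > 0" "X \<subseteq> U"
  shows "magnitude t X
       = magnitude t U - kernel_form (zeta t) U (\<lambda>x. weighting t X x - weighting t U x)"
proof -
  have X: "finite X" using assms finite_subset by blast
  have outside: "weighting t X x = 0" if "x \<notin> X" for x
    using weighting_outside[OF X assms(2) that] .
  have "(\<Sum>x\<in>U. weighting t X x) = magnitude t X"
    unfolding magnitude_def using assms(1,3) outside by (intro sum.mono_neutral_right) auto
  moreover have "kernel_form (zeta t) U (weighting t X) = kernel_form (zeta t) X (weighting t X)"
  proof -
    have "kernel_form (zeta t) U (weighting t X)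
        = (\<Sum>x\<in>X. \<Sum>y\<in>U. weighting t X x * weighting t X y * zeta t x y)"
      unfolding kernel_form_def using assms(1,3) outside by (intro sum.mono_neutral_right) auto
    also have "\<dots> = kernel_form (zeta t) X (weighting t X)"
      unfolding kernel_form_def using assms(1,3) outside
      by (intro sum.cong refl sum.mono_neutral_right) auto
    finally show ?thesis .
  qed
  ultimately show ?thesis
    using magnitude_variational[OF assms(1,2), of "weighting t X"] kernel_form_weighting[OF X assms(2)]
    by simp
qed

lemma magnitude_mono:
  assumes "finite U" "t > 0" "X \<subseteq> U"
  shows "magnitude t X \<le> magnitude t U"
  using magnitude_subset_eq[OF assms] kernel_form_nonneg[OF strictly_pd_zeta[OF assms(2)] assms(1)]
  by simp

lemma magnitude_eq_iff_weighting_eq: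
  assumes "finite U" "t > 0" "X \<subseteq> U"
  shows "magnitude t X = magnitude t U \<longleftrightarrow> weighting t X = weighting t U"
proof -
  have X: "finite X" using assms finite_subset by blast
  have "magnitude t X = magnitude t U
      \<longleftrightarrow> (\<forall>x\<in>U. weighting t X x - weighting t U x = 0)"
    using magnitude_subset_eq[OF assms] kernel_form_eq_0_iff[OF strictly_pd_zeta[OF assms(2)] assms(1)]
    by simp
  also have "\<dots> \<longleftrightarrow> weighting t X = weighting t U"
  proof
    assume eq: "\<forall>x\<in>U. weighting t X x - weighting t U x = 0"
    show "weighting t X = weighting t U"
    proof
      fix x
      show "weighting t X x = weighting t U x"
        using eq weighting_outside[OF X assms(2)] weighting_outside[OF assms(1,2)] assms(3)
        by (cases "x \<in> U") auto
    qed
  qed simp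
  finally show ?thesis .
qed

section \<open>The magnitude distance\<close>

lemma mag_equivalent_iff_weighting_eq:
  assumes "finite X" "finite Y" "t > 0"
  shows "mag_equivalent t X Y \<longleftrightarrow> weighting t X = weighting t Y"
proof
  assume "mag_equivalent t X Y"
  then show "weighting t X = weighting t Y"
    unfolding mag_equivalent_def
    by (metis weighting_support[OF assms(1,3)] weighting_support[OF assms(2,3)])
next
  assume eq: "weighting t X = weighting t Y"
  have "{x\<in>X. weighting t X x \<noteq> 0} = {x. weighting t X x \<noteq> 0}"
    "{y\<in>Y. weighting t Y y \<noteq> 0} = {y. weighting t Y y \<noteq> 0}"
    using weighting_outside[OF assms(1,3)] weighting_outside[OF assms(2,3)] by auto
  then show "mag_equivalent t X Y"
    unfolding mag_equivalent_def using eq by simp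
qed

lemma mag_dist_commute: "mag_dist t X Y = mag_dist t Y X"
  by (simp add: mag_dist_def Un_commute)

lemma mag_dist_nonneg:
  assumes "finite X" "finite Y" "t > 0"
  shows "mag_dist t X Y \<ge> 0"
  using magnitude_mono[of "X \<union> Y" t X] magnitude_mono[of "X \<union> Y" t Y] assms
  by (simp add: mag_dist_def)

lemma mag_dist_eq_0_iff:
  assumes "finite X" "finite Y" "t > 0"
  shows "mag_dist t X Y = 0 \<longleftrightarrow> mag_equivalent t X Y"
proof -
  have U: "finite (X \<union> Y)" using assms by simp
  have "mag_dist t X Y = 0
      \<longleftrightarrow> magnitude t X = magnitude t (X \<union> Y) \<and> magnitude t Y = magnitude t (X \<union> Y)"
    using magnitude_mono[OF U assms(3), of X] magnitude_mono[OF U assms(3), of Y]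
    by (auto simp: mag_dist_def)
  also have "\<dots> \<longleftrightarrow> weighting t X = weighting t (X \<union> Y) \<and> weighting t Y = weighting t (X \<union> Y)"
    using magnitude_eq_iff_weighting_eq[OF U assms(3)] by simp
  also have "\<dots> \<longleftrightarrow> weighting t X = weighting t Y"
    using weighting_Un[OF assms] by auto
  finally show ?thesis
    using mag_equivalent_iff_weighting_eq[OF assms] by simp
qed

section \<open>Failure of the triangle inequality\<close>

lemma magnitude_two_points:
  assumes "t > 0" "x \<noteq> y"
  shows "magnitude t {x, y} = 2 / (1 + zeta t x y)"
proof -
  have "zeta t x y > 0" by (simp add: zeta_def)
  then have "1 + zeta t x y \<noteq> 0" by linarith
  then have "is_weighting t {x, y} (\<lambda>z. if z \<in> {x, y} then 1 / (1 + zeta t x y) else 0)"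
    using assms(2) zeta_commute[of t y x] by (simp add: is_weighting_def add_divide_distrib[symmetric])
  then show ?thesis
    using assms by (simp add: magnitude_eqI)
qed

lemma magnitude_isosceles_triangle:
  assumes "t > 0" "distinct [p0, p1, p]"
    and "zeta t p0 p1 = a" "zeta t p0 p = c" "zeta t p1 p = c" "1 + a \<noteq> 2 * c\<^sup>2"
  shows "magnitude t {p0, p1, p} = 1 + 2 * (1 - c)\<^sup>2 / (1 + a - 2 * c\<^sup>2)"
proof -
  note zeta = assms(3-5) assms(3-5)[THEN trans[OF zeta_commute]]
  define \<alpha> where "\<alpha> = (1 - c) / (1 + a - 2 * c\<^sup>2)"
  define \<beta> where "\<beta> = 1 - 2 * c * \<alpha>"
  have "1 + a - 2 * c\<^sup>2 \<noteq> 0" using assms(6) by simp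
  then have "\<alpha> * (1 + a - 2 * c\<^sup>2) = 1 - c" by (simp add: \<alpha>_def)
  then have "\<alpha> + a * \<alpha> + c * \<beta> = 1" by (simp add: \<beta>_def algebra_simps power2_eq_square)
  moreover have distinct: "p0 \<noteq> p1" "p0 \<noteq> p" "p1 \<noteq> p" "p1 \<noteq> p0" "p \<noteq> p0" "p \<noteq> p1"
    using assms(2) by auto
  ultimately have "is_weighting t {p0, p1, p}
      (\<lambda>x. if x = p0 \<or> x = p1 then \<alpha> else if x = p then \<beta> else 0)"
    by (auto simp: is_weighting_def zeta \<beta>_def algebra_simps)
  then have "magnitude t {p0, p1, p} = 1 + 2 * \<alpha> * (1 - c)"
    using assms(1) distinct by (simp add: magnitude_eqI \<beta>_def algebra_simps)
  then show ?thesis by (simp add: \<alpha>_def power2_eq_square)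
qed

lemma magnitude_rhombus:
  assumes "t > 0" "distinct [p0, p1, p2, p3]"
    and "zeta t p0 p1 = a" "zeta t p2 p3 = b"
    and "zeta t p0 p2 = c" "zeta t p0 p3 = c" "zeta t p1 p2 = c" "zeta t p1 p3 = c"
    and "(1 + a) * (1 + b) \<noteq> 4 * c\<^sup>2"
  shows "magnitude t {p0, p1, p2, p3} = 2 * (2 + a + b - 4 * c) / ((1 + a) * (1 + b) - 4 * c\<^sup>2)"
proof -
  note zeta = assms(3-8) assms(3-8)[THEN trans[OF zeta_commute]]
  define \<delta> where "\<delta> = (1 + a) * (1 + b) - 4 * c\<^sup>2"
  define \<alpha> where "\<alpha> = (1 + b - 2 * c) / \<delta>"
  define \<beta> where "\<beta> = (1 + a - 2 * c) / \<delta>"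
  have "\<delta> \<noteq> 0" using assms(9) by (simp add: \<delta>_def)
  then have "\<alpha> + a * \<alpha> + 2 * c * \<beta> = ((1 + a) * (1 + b - 2 * c) + 2 * c * (1 + a - 2 * c)) / \<delta>"
    "\<beta> + b * \<beta> + 2 * c * \<alpha> = ((1 + b) * (1 + a - 2 * c) + 2 * c * (1 + b - 2 * c)) / \<delta>"
    by (simp_all add: \<alpha>_def \<beta>_def field_simps)
  moreover have "(1 + a) * (1 + b - 2 * c) + 2 * c * (1 + a - 2 * c) = \<delta>"
    "(1 + b) * (1 + a - 2 * c) + 2 * c * (1 + b - 2 * c) = \<delta>"
    by (simp_all add: \<delta>_def algebra_simps power2_eq_square)
  ultimately have "\<alpha> + a * \<alpha> + 2 * c * \<beta> = 1" "\<beta> + b * \<beta> + 2 * c * \<alpha> = 1"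
    using \<open>\<delta> \<noteq> 0\<close> by simp_all
  moreover have distinct: "p0 \<noteq> p1" "p0 \<noteq> p2" "p0 \<noteq> p3" "p1 \<noteq> p2" "p1 \<noteq> p3" "p2 \<noteq> p3"
    "p1 \<noteq> p0" "p2 \<noteq> p0" "p3 \<noteq> p0" "p2 \<noteq> p1" "p3 \<noteq> p1" "p3 \<noteq> p2"
    using assms(2) by auto
  ultimately have "is_weighting t {p0, p1, p2, p3}
      (\<lambda>x. if x = p0 \<or> x = p1 then \<alpha> else if x = p2 \<or> x = p3 then \<beta> else 0)"
    by (auto simp: is_weighting_def zeta algebra_simps)
  then have "magnitude t {p0, p1, p2, p3} = 2 * \<alpha> + 2 * \<beta>"
    using assms(1) distinct by (simp add: magnitude_eqI)
  then show ?thesis by (simp add: \<alpha>_def \<beta>_def \<delta>_def add_divide_distrib[symmetric])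
qed

lemma mag_dist_triangle_violation:
  fixes p0 p1 p2 p3 :: "'a::euclidean_space"
  defines "q \<equiv> 9 / 10 :: real"
  assumes "t > 0" "zeta t p0 p1 = q ^ 6" "zeta t p2 p3 = q ^ 8"
    and "zeta t p0 p2 = q ^ 5" "zeta t p0 p3 = q ^ 5" "zeta t p1 p2 = q ^ 5" "zeta t p1 p3 = q ^ 5"
  shows "mag_dist t {p2} {p0, p1, p3} > mag_dist t {p2} {p0, p1} + mag_dist t {p0, p1} {p0, p1, p3}"
proof -
  have ne: "x \<noteq> y" if "zeta t x y = q ^ k" "k > 0" for x y :: 'a and k
  proof
    assume "x = y"
    then show False using that power_less_one_iff[of q k] by (simp add: q_def)
  qed
  have distinct: "distinct [p0, p1, p2, p3]"
    using ne[OF assms(3)] ne[OF assms(5)] ne[OF assms(6)] ne[OF assms(7)] ne[OF assms(8)]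
      ne[OF assms(4)]
    by simp
  have "magnitude t {p2} = 1"
    using magnitude_eqI[OF _ assms(2), of "{p2}" "\<lambda>x. if x = p2 then 1 else 0"]
    by (simp add: is_weighting_def)
  moreover have "magnitude t {p0, p1} = 2 / (1 + q ^ 6)"
    using magnitude_two_points[OF assms(2) ne[OF assms(3)]] assms(3) by simp
  moreover have "magnitude t {p0, p1, p2} = 1 + 2 * (1 - q ^ 5)\<^sup>2 / (1 + q ^ 6 - 2 * (q ^ 5)\<^sup>2)"
    "magnitude t {p0, p1, p3} = 1 + 2 * (1 - q ^ 5)\<^sup>2 / (1 + q ^ 6 - 2 * (q ^ 5)\<^sup>2)"
    by (rule magnitude_isosceles_triangle[OF assms(2)];
        use distinct assms(3,5-8) in \<open>simp add: q_def power_divide\<close>)+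
  moreover have "magnitude t {p0, p1, p2, p3}
      = 2 * (2 + q ^ 6 + q ^ 8 - 4 * q ^ 5) / ((1 + q ^ 6) * (1 + q ^ 8) - 4 * (q ^ 5)\<^sup>2)"
    by (rule magnitude_rhombus[OF assms(2) distinct assms(3-8)]) (simp add: q_def power_divide)
  moreover have "{p2} \<union> {p0, p1, p3} = {p0, p1, p2, p3}" "{p2} \<union> {p0, p1} = {p0, p1, p2}"
    "{p0, p1} \<union> {p0, p1, p3} = {p0, p1, p3}"
    by auto
  ultimately show ?thesis
    unfolding mag_dist_def by (simp add: q_def power_divide)
qed

lemma zeta_orthonormal_plane:
  fixes e1 e2 :: "'a::euclidean_space"
  assumes "e1 \<in> Basis" "e2 \<in> Basis" "e1 \<noteq> e2"
  shows "zeta t (a *\<^sub>R e1 + b *\<^sub>R e2) (a' *\<^sub>R e1 + b' *\<^sub>R e2)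
       = exp (- t * sqrt ((a - a')\<^sup>2 + (b - b')\<^sup>2))"
proof -
  have "(norm ((a - a') *\<^sub>R e1 + (b - b') *\<^sub>R e2))\<^sup>2 = (a - a')\<^sup>2 + (b - b')\<^sup>2"
    unfolding power2_norm_eq_inner
    using assms by (simp add: inner_add_left inner_add_right inner_Basis power2_eq_square)
  then have "norm ((a - a') *\<^sub>R e1 + (b - b') *\<^sub>R e2) = sqrt ((a - a')\<^sup>2 + (b - b')\<^sup>2)"
    by (metis norm_ge_zero real_sqrt_unique)
  moreover have "a *\<^sub>R e1 + b *\<^sub>R e2 - (a' *\<^sub>R e1 + b' *\<^sub>R e2) = (a - a') *\<^sub>R e1 + (b - b') *\<^sub>R e2"
    by (simp add: algebra_simps)
  ultimately show ?thesis by (simp add: zeta_def)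
qed

text \<open>The rhombus with vertices \<open>\<plusminus>3 \<mu> e\<^sub>1\<close>, \<open>\<plusminus>4 \<mu> e\<^sub>2\<close> has sides \<open>5 \<mu>\<close> and diagonals
  \<open>6 \<mu>\<close>, \<open>8 \<mu>\<close>; the scale \<open>\<mu>\<close> is chosen so that \<open>exp (- t * \<mu>) = 9 / 10\<close>.\<close>
lemma mag_dist_not_triangle:
  assumes "t > 0" "DIM('a::euclidean_space) > 1"
  shows "\<exists>X Y Z :: 'a set. finite X \<and> finite Y \<and> finite Z \<and>
           mag_dist t X Z > mag_dist t X Y + mag_dist t Y Z"
proof -
  obtain e1 e2 :: 'a where e: "e1 \<in> Basis" "e2 \<in> Basis" "e1 \<noteq> e2"
    using assms(2) card_le_Suc0_iff_eq[of "Basis :: 'a set"] by (auto simp: not_le[symmetric])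
  define \<mu> where "\<mu> = - ln (9 / 10) / t"
  have "ln (9 / 10 :: real) < 0" by (subst ln_less_zero_iff) auto
  then have "\<mu> > 0" using assms(1) by (simp add: \<mu>_def divide_neg_pos)
  have scale: "exp (- t * sqrt ((real k * \<mu>)\<^sup>2)) = (9 / 10) ^ k" for k
  proof -
    have "sqrt ((real k * \<mu>)\<^sup>2) = real k * \<mu>" using \<open>\<mu> > 0\<close> by simp
    moreover have "- t * (real k * \<mu>) = real k * ln (9 / 10)" using assms(1) by (simp add: \<mu>_def)
    ultimately have "- t * sqrt ((real k * \<mu>)\<^sup>2) = real k * ln (9 / 10)" by simp
    then show ?thesis by (simp add: exp_of_nat_mult)
  qed
  define p0 where "p0 = (3 * \<mu>) *\<^sub>R e1 + 0 *\<^sub>R e2"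
  define p1 where "p1 = (- 3 * \<mu>) *\<^sub>R e1 + 0 *\<^sub>R e2"
  define p2 where "p2 = 0 *\<^sub>R e1 + (4 * \<mu>) *\<^sub>R e2"
  define p3 where "p3 = 0 *\<^sub>R e1 + (- 4 * \<mu>) *\<^sub>R e2"
  have distances: "(3 * \<mu> - - 3 * \<mu>)\<^sup>2 + (0 - 0)\<^sup>2 = (real 6 * \<mu>)\<^sup>2"
    "(0 - 0)\<^sup>2 + (4 * \<mu> - - 4 * \<mu>)\<^sup>2 = (real 8 * \<mu>)\<^sup>2"
    "(3 * \<mu> - 0)\<^sup>2 + (0 - 4 * \<mu>)\<^sup>2 = (real 5 * \<mu>)\<^sup>2"
    "(3 * \<mu> - 0)\<^sup>2 + (0 - - 4 * \<mu>)\<^sup>2 = (real 5 * \<mu>)\<^sup>2"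
    "(- 3 * \<mu> - 0)\<^sup>2 + (0 - 4 * \<mu>)\<^sup>2 = (real 5 * \<mu>)\<^sup>2"
    "(- 3 * \<mu> - 0)\<^sup>2 + (0 - - 4 * \<mu>)\<^sup>2 = (real 5 * \<mu>)\<^sup>2"
    by (simp_all add: power2_eq_square algebra_simps)
  have "zeta t p0 p1 = (9 / 10) ^ 6" "zeta t p2 p3 = (9 / 10) ^ 8"
    "zeta t p0 p2 = (9 / 10) ^ 5" "zeta t p0 p3 = (9 / 10) ^ 5"
    "zeta t p1 p2 = (9 / 10) ^ 5" "zeta t p1 p3 = (9 / 10) ^ 5"
    unfolding p0_def p1_def p2_def p3_def zeta_orthonormal_plane[OF e] distances scale
    by (rule refl)+
  from mag_dist_triangle_violation[OF assms(1) this]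
  show ?thesis by (intro exI[of _ "{p2}"] exI[of _ "{p0, p1}"] exI[of _ "{p0, p1, p3}"]) simp
qed

theorem theorem5p2:
  fixes t :: real
  assumes "t > 0"
  shows "(\<forall>X Y :: 'a::euclidean_space set. finite X \<longrightarrow> finite Y \<longrightarrow>
            mag_dist t X Y = mag_dist t Y X)
       \<and> (\<forall>X Y :: 'a set. finite X \<longrightarrow> finite Y \<longrightarrow> mag_dist t X Y \<ge> 0)
       \<and> (\<forall>X Y :: 'a set. finite X \<longrightarrow> finite Y \<longrightarrow>
            (mag_dist t X Y = 0 \<longleftrightarrow> mag_equivalent t X Y))
       \<and> (DIM('a) > 1 \<longrightarrow>
            (\<exists>X Y Z :: 'a set. finite X \<and> finite Y \<and> finite Z \<and>
               mag_dist t X Z > mag_dist t X Y + mag_dist t Y Z))"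
proof (intro conjI allI impI)
  fix X Y :: "'a set"
  show "mag_dist t X Y = mag_dist t Y X" by (rule mag_dist_commute)
next
  fix X Y :: "'a set"
  assume "finite X" "finite Y"
  then show "mag_dist t X Y \<ge> 0" using assms by (rule mag_dist_nonneg)
next
  fix X Y :: "'a set"
  assume "finite X" "finite Y"
  then show "mag_dist t X Y = 0 \<longleftrightarrow> mag_equivalent t X Y" using assms by (rule mag_dist_eq_0_iff)
next
  assume "DIM('a) > 1"
  with assms show "\<exists>X Y Z :: 'a set. finite X \<and> finite Y \<and> finite Z \<and>
      mag_dist t X Z > mag_dist t X Y + mag_dist t Y Z"
    by (rule mag_dist_not_triangle)
qed

end
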